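(* Assume Conditions A and B, and suppose $a$ and $b$ are natural boundaries. Let $c_0(a),c_0(b)\in[0,\infty]$ be the boundary limits of $c_0$. Then $\lim_{y\to a}\frac{g_0(z)-g_0(y)}{\zeta(z)-\zeta(y)}=c_0(a)$ for all $z\in\mathcal I$; $\lim_{z\to b}\frac{g_0(z)-g_0(y)}{\zeta(z)-\zeta(y)}=c_0(b)$ for all $y\in\mathcal I$; $\lim_{(y,z)\to(a,a),\,y<z}\frac{g_0(z)-g_0(y)}{\zeta(z)-\zeta(y)}=c_0(a)$ and $\lim_{(y,z)\to(b,b),\,y<z}\frac{g_0(z)-g_0(y)}{\zeta(z)-\zeta(y)}=c_0(b)$; $\lim_{y\to a}g_0(y)/\zeta(y)=c_0(a)$ and $\lim_{z\to b}g_0(z)/\zeta(z)=c_0(b)$. In particular $\lim_{y\to a}g_0(y)=-\infty$ when $c_0(a)>0$ and $\lim_{z\to b}g_0(z)=\infty$ when $c_0(b)>0$.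
   Context: Setting. Let $\mathcal I=(a,b)$ with $-\infty\le a<b\le\infty$, let $\mu,\sigma:\mathcal I\to\mathbb R$ be continuous with $\sigma(x)\neq0$ on $\mathcal I$, and let $X_0$ be the regular diffusion $dX_0(t)=\mu(X_0(t))\,dt+\sigma(X_0(t))\,dW(t)$, $X_0(0)=x_0\in\mathcal I$. Scale density $s(x)=\exp(-\int^x 2\mu/\sigma^2)$, scale function $S(x)=\int^x s$, scale measure $S[y,z]=S(z)-S(y)$ ($dS$), speed density $m=1/(\sigma^2 s)$, speed measure $M[y,z]=\int_y^z m$ ($dM$). Boundaries are classified in Feller's sense; $a$ is attainable iff regular or exit. Condition A: $S(a,x]<\infty$ for $x\in\mathcal I$ and $S[x,b)=\infty$ (so $a$ is regular, exit or natural, $b$ is natural or entrance); if $a$ is reflecting then $\lim_{x\to a}s(x)M[x,b)<\infty$; if $b$ is natural then $M[y,b)<\infty$ for $y\in\mathcal I$; infinite boundaries are natural. State space $\mathcal E$: $\mathcal I$ with $a$ added if $a$ is attainable and $b$ added if $b$ is entrance. Condition B: (a) $c_0:\mathcal E\to[0,\infty)$ is continuous; if $a$ (resp. $b$) is natural, $c_0(a):=\lim_{x\to a}c_0(x)$ (resp. $c_0(b):=\lim_{x\to b}c_0(x)$) exists in $[0,\infty]$, with $c_0(-\infty)=\infty$ if $a=-\infty$ and $c_0(\infty)=\infty$ if $b=\infty$; $\int_y^b c_0\,dM<\infty$ for every $y\in\mathcal I$; if $a$ is reflecting, $\lim_{x\to a}s(x)\int_x^b c_0\,dM<\infty$. (b)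 with $\overline{\mathcal R}=\{(y,z)\in\mathcal E^2:y\le z\}$, $c_1:\overline{\mathcal R}\to[0,\infty]$ is continuous with $c_1\ge k_1$ for a constant $k_1>0$; for each $z\in\mathcal E\setminus\{a\}$, $c_1(\cdot,z)$ is continuously differentiable near $a$, and for each $y\in\mathcal E\setminus\{b\}$, $c_1(y,\cdot)$ is continuously differentiable near $b$. Functions: $g_0(x)=\int_{x_0}^x\int_u^b 2c_0(v)\,dM(v)\,dS(u)$ and $\zeta(x)=\int_{x_0}^x 2M[u,b)\,dS(u)$ for $x\in\mathcal I$. *)

theory Defs
  imports "HOL-Analysis.Analysis"
begin

definition Iab :: "ereal \<Rightarrow> ereal \<Rightarrow> real set" where
  "Iab a b = {x. a < ereal x \<and> ereal x < b}"

definition sint :: "(real \<Rightarrow> real) \<Rightarrow> real \<Rightarrow> real \<Rightarrow> real" where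
  "sint f u v = (if u \<le> v then integral {u..v} f else - integral {v..u} f)"

definition sdens :: "(real \<Rightarrow> real) \<Rightarrow> (real \<Rightarrow> real) \<Rightarrow> real \<Rightarrow> real \<Rightarrow> real" where
  "sdens mu sig x0 x = exp (- sint (\<lambda>v. 2 * mu v / (sig v)^2) x0 x)"

definition mdens :: "(real \<Rightarrow> real) \<Rightarrow> (real \<Rightarrow> real) \<Rightarrow> real \<Rightarrow> real \<Rightarrow> real" where
  "mdens mu sig x0 x = 1 / ((sig x)^2 * sdens mu sig x0 x)"

definition Smeas :: "(real \<Rightarrow> real) \<Rightarrow> (real \<Rightarrow> real) \<Rightarrow> real \<Rightarrow> real set \<Rightarrow> ennreal" where
  "Smeas mu sig x0 A = (\<integral>\<^sup>+ x\<in>A. ennreal (sdens mu sig x0 x) \<partial>lborel)"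

definition Mmeas :: "(real \<Rightarrow> real) \<Rightarrow> (real \<Rightarrow> real) \<Rightarrow> real \<Rightarrow> real set \<Rightarrow> ennreal" where
  "Mmeas mu sig x0 A = (\<integral>\<^sup>+ x\<in>A. ennreal (mdens mu sig x0 x) \<partial>lborel)"

definition Sigma_a :: "(real \<Rightarrow> real) \<Rightarrow> (real \<Rightarrow> real) \<Rightarrow> real \<Rightarrow> ereal \<Rightarrow> ereal \<Rightarrow> ennreal" where
  "Sigma_a mu sig x0 a b = (\<integral>\<^sup>+ u\<in>{u\<in>Iab a b. u \<le> x0}.
     Mmeas mu sig x0 {v\<in>Iab a b. u \<le> v \<and> v \<le> x0} * ennreal (sdens mu sig x0 u) \<partial>lborel)"

definition N_a :: "(real \<Rightarrow> real) \<Rightarrow> (real \<Rightarrow> real) \<Rightarrow> real \<Rightarrow> ereal \<Rightarrow> ereal \<Rightarrow> ennreal" where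
  "N_a mu sig x0 a b = (\<integral>\<^sup>+ u\<in>{u\<in>Iab a b. u \<le> x0}.
     Mmeas mu sig x0 {v\<in>Iab a b. v \<le> u} * ennreal (sdens mu sig x0 u) \<partial>lborel)"

definition Sigma_b :: "(real \<Rightarrow> real) \<Rightarrow> (real \<Rightarrow> real) \<Rightarrow> real \<Rightarrow> ereal \<Rightarrow> ereal \<Rightarrow> ennreal" where
  "Sigma_b mu sig x0 a b = (\<integral>\<^sup>+ u\<in>{u\<in>Iab a b. x0 \<le> u}.
     Mmeas mu sig x0 {v\<in>Iab a b. x0 \<le> v \<and> v \<le> u} * ennreal (sdens mu sig x0 u) \<partial>lborel)"

definition N_b :: "(real \<Rightarrow> real) \<Rightarrow> (real \<Rightarrow> real) \<Rightarrow> real \<Rightarrow> ereal \<Rightarrow> ereal \<Rightarrow> ennreal" where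
  "N_b mu sig x0 a b = (\<integral>\<^sup>+ u\<in>{u\<in>Iab a b. x0 \<le> u}.
     Mmeas mu sig x0 {v\<in>Iab a b. u \<le> v} * ennreal (sdens mu sig x0 u) \<partial>lborel)"

definition regular_a where
  "regular_a mu sig x0 a b \<longleftrightarrow> Sigma_a mu sig x0 a b < \<infinity> \<and> N_a mu sig x0 a b < \<infinity>"
definition exit_a where
  "exit_a mu sig x0 a b \<longleftrightarrow> Sigma_a mu sig x0 a b < \<infinity> \<and> N_a mu sig x0 a b = \<infinity>"
definition entrance_a where
  "entrance_a mu sig x0 a b \<longleftrightarrow> Sigma_a mu sig x0 a b = \<infinity> \<and> N_a mu sig x0 a b < \<infinity>"
definition natural_a where
  "natural_a mu sig x0 a b \<longleftrightarrow> Sigma_a mu sig x0 a b = \<infinity> \<and> N_a mu sig x0 a b = \<infinity>"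

definition regular_b where
  "regular_b mu sig x0 a b \<longleftrightarrow> Sigma_b mu sig x0 a b < \<infinity> \<and> N_b mu sig x0 a b < \<infinity>"
definition exit_b where
  "exit_b mu sig x0 a b \<longleftrightarrow> Sigma_b mu sig x0 a b < \<infinity> \<and> N_b mu sig x0 a b = \<infinity>"
definition entrance_b where
  "entrance_b mu sig x0 a b \<longleftrightarrow> Sigma_b mu sig x0 a b = \<infinity> \<and> N_b mu sig x0 a b < \<infinity>"
definition natural_b where
  "natural_b mu sig x0 a b \<longleftrightarrow> Sigma_b mu sig x0 a b = \<infinity> \<and> N_b mu sig x0 a b = \<infinity>"

definition attainable_a where
  "attainable_a mu sig x0 a b \<longleftrightarrow> regular_a mu sig x0 a b \<or> exit_a mu sig x0 a b"

definition at_left_end :: "ereal \<Rightarrow> real filter" where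
  "at_left_end a = (if a = -\<infinity> then at_bot else at_right (real_of_ereal a))"

definition at_right_end :: "ereal \<Rightarrow> real filter" where
  "at_right_end b = (if b = \<infinity> then at_top else at_left (real_of_ereal b))"

definition Eleft where
  "Eleft mu sig x0 a b =
     (if a \<noteq> -\<infinity> \<and> attainable_a mu sig x0 a b then {real_of_ereal a} else {})"

definition Eright where
  "Eright mu sig x0 a b =
     (if b \<noteq> \<infinity> \<and> entrance_b mu sig x0 a b then {real_of_ereal b} else {})"

definition Espace where
  "Espace mu sig x0 a b = Iab a b \<union> Eleft mu sig x0 a b \<union> Eright mu sig x0 a b"

definition diff_setting :: "(real \<Rightarrow> real) \<Rightarrow> (real \<Rightarrow> real) \<Rightarrow> real \<Rightarrow> ereal \<Rightarrow> ereal \<Rightarrow> bool" where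
  "diff_setting mu sig x0 a b \<longleftrightarrow> a < b \<and> x0 \<in> Iab a b \<and>
     continuous_on (Iab a b) mu \<and> continuous_on (Iab a b) sig \<and>
     (\<forall>x\<in>Iab a b. sig x \<noteq> 0)"

text \<open>refl_a: the (model-specified) flag that the boundary a is a reflecting
  (regular) boundary.\<close>
definition cond_A :: "(real \<Rightarrow> real) \<Rightarrow> (real \<Rightarrow> real) \<Rightarrow> real \<Rightarrow> ereal \<Rightarrow> ereal \<Rightarrow> bool \<Rightarrow> bool" where
  "cond_A mu sig x0 a b refl_a \<longleftrightarrow>
     (\<forall>x\<in>Iab a b. Smeas mu sig x0 {v\<in>Iab a b. v \<le> x} < \<infinity>) \<and>
     (\<forall>x\<in>Iab a b. Smeas mu sig x0 {v\<in>Iab a b. x \<le> v} = \<infinity>) \<and>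
     (refl_a \<longrightarrow> regular_a mu sig x0 a b \<and>
        (\<exists>L<\<infinity>. ((\<lambda>x. ennreal (sdens mu sig x0 x) * Mmeas mu sig x0 {v\<in>Iab a b. x \<le> v})
                  \<longlongrightarrow> L) (at_left_end a))) \<and>
     (natural_b mu sig x0 a b \<longrightarrow> (\<forall>y\<in>Iab a b. Mmeas mu sig x0 {v\<in>Iab a b. y \<le> v} < \<infinity>)) \<and>
     (a = -\<infinity> \<longrightarrow> natural_a mu sig x0 a b) \<and>
     (b = \<infinity> \<longrightarrow> natural_b mu sig x0 a b)"

definition cond_B :: "(real \<Rightarrow> real) \<Rightarrow> (real \<Rightarrow> real) \<Rightarrow> real \<Rightarrow> ereal \<Rightarrow> ereal \<Rightarrow> bool
     \<Rightarrow> (real \<Rightarrow> real) \<Rightarrow> (real \<Rightarrow> real \<Rightarrow> ereal) \<Rightarrow> real \<Rightarrow> bool" where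
  "cond_B mu sig x0 a b refl_a c0 c1 k1 \<longleftrightarrow>
     (let E = Espace mu sig x0 a b; I = Iab a b in
     \<comment> \<open>(a) running cost c0\<close>
     (\<forall>x\<in>E. 0 \<le> c0 x) \<and> continuous_on E c0 \<and>
     (natural_a mu sig x0 a b \<longrightarrow>
        (\<exists>L. ((\<lambda>x. ereal (c0 x)) \<longlongrightarrow> L) (at_left_end a) \<and> (a = -\<infinity> \<longrightarrow> L = \<infinity>))) \<and>
     (natural_b mu sig x0 a b \<longrightarrow>
        (\<exists>L. ((\<lambda>x. ereal (c0 x)) \<longlongrightarrow> L) (at_right_end b) \<and> (b = \<infinity> \<longrightarrow> L = \<infinity>))) \<and>
     (\<forall>y\<in>I. (\<integral>\<^sup>+ v\<in>{v\<in>I. y \<le> v}. ennreal (c0 v * mdens mu sig x0 v) \<partial>lborel) < \<infinity>) \<and>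
     (refl_a \<longrightarrow>
        (\<exists>L<\<infinity>. ((\<lambda>x. ennreal (sdens mu sig x0 x) *
                 (\<integral>\<^sup>+ v\<in>{v\<in>I. x \<le> v}. ennreal (c0 v * mdens mu sig x0 v) \<partial>lborel))
                  \<longlongrightarrow> L) (at_left_end a))) \<and>
     \<comment> \<open>(b) switching cost c1 on {(y,z) in E^2. y <= z}\<close>
     0 < k1 \<and>
     continuous_on {(y, z). y \<in> E \<and> z \<in> E \<and> y \<le> z} (\<lambda>(y, z). c1 y z) \<and>
     (\<forall>y\<in>E. \<forall>z\<in>E. y \<le> z \<longrightarrow> ereal k1 \<le> c1 y z) \<and>
     (\<forall>z\<in>E - Eleft mu sig x0 a b. \<exists>p\<in>I. p \<le> z \<and> (\<exists>D :: real \<Rightarrow> real.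
        (\<forall>y\<in>E. y \<le> p \<longrightarrow> \<bar>c1 y z\<bar> \<noteq> \<infinity> \<and>
           ((\<lambda>t. real_of_ereal (c1 t z)) has_real_derivative D y) (at y within {t\<in>E. t \<le> p})) \<and>
        continuous_on {t\<in>E. t \<le> p} D)) \<and>
     (\<forall>y\<in>E - Eright mu sig x0 a b. \<exists>p\<in>I. y \<le> p \<and> (\<exists>D :: real \<Rightarrow> real.
        (\<forall>z\<in>E. p \<le> z \<longrightarrow> \<bar>c1 y z\<bar> \<noteq> \<infinity> \<and>
           ((\<lambda>t. real_of_ereal (c1 y t)) has_real_derivative D z) (at z within {t\<in>E. p \<le> t})) \<and>
        continuous_on {t\<in>E. p \<le> t} D)))"

definition c0tail where
  "c0tail mu sig x0 a b c0 u =
     enn2real (\<integral>\<^sup>+ v\<in>{v\<in>Iab a b. u \<le> v}. ennreal (2 * c0 v * mdens mu sig x0 v) \<partial>lborel)"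

definition Mtail where
  "Mtail mu sig x0 a b u = enn2real (Mmeas mu sig x0 {v\<in>Iab a b. u \<le> v})"

definition g0 :: "(real \<Rightarrow> real) \<Rightarrow> (real \<Rightarrow> real) \<Rightarrow> real \<Rightarrow> ereal \<Rightarrow> ereal \<Rightarrow> (real \<Rightarrow> real) \<Rightarrow> real \<Rightarrow> real" where
  "g0 mu sig x0 a b c0 x = sint (\<lambda>u. c0tail mu sig x0 a b c0 u * sdens mu sig x0 u) x0 x"

definition zeta :: "(real \<Rightarrow> real) \<Rightarrow> (real \<Rightarrow> real) \<Rightarrow> real \<Rightarrow> ereal \<Rightarrow> ereal \<Rightarrow> real \<Rightarrow> real" where
  "zeta mu sig x0 a b x = sint (\<lambda>u. 2 * Mtail mu sig x0 a b u * sdens mu sig x0 u) x0 x"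

end

theory Submission
  imports Defs
begin

text \<open>Write \<open>s\<close>, \<open>m\<close> for the scale and speed densities, \<open>M u = M[u,b)\<close> and
  \<open>C u = \<integral>\<^sub>u\<^sup>b c\<^sub>0 dM\<close>. Then \<open>g\<^sub>0' = 2 C s\<close> and \<open>\<zeta>' = 2 M s\<close>,
  so the quotient of the derivatives is \<open>C / M\<close>. At the natural boundary \<open>a\<close> the speed
  measure of \<open>(a, x\<^sub>0]\<close> is infinite (its scale measure is finite, while \<open>N(a) = \<infinity>\<close>),
  so \<open>M u \<rightarrow> \<infinity>\<close> and L'Hospital's rule applied to \<open>C / M\<close> gives \<open>c\<^sub>0(a)\<close>; at \<open>b\<close>,
  \<open>C u / M u\<close> is an \<open>M\<close>-average of \<open>c\<^sub>0\<close> over \<open>[u, b)\<close> and tends to \<open>c\<^sub>0(b)\<close>.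
  Naturality of both ends also forces \<open>\<zeta> \<rightarrow> -\<infinity>\<close> at \<open>a\<close> and \<open>\<zeta> \<rightarrow> \<infinity>\<close> at \<open>b\<close>. By the
  Cauchy mean value theorem every difference quotient of \<open>g\<^sub>0\<close> and \<open>\<zeta>\<close> near an end is a
  value of \<open>g\<^sub>0' / \<zeta>'\<close> there, which yields all the limits.\<close>

section \<open>Open intervals with extended real ends\<close>

lemma Iab_iff: "x \<in> Iab a b \<longleftrightarrow> a < ereal x \<and> ereal x < b"
  by (simp add: Iab_def)

lemma Iab_between: "y \<in> Iab a b \<Longrightarrow> z \<in> Iab a b \<Longrightarrow> y \<le> x \<Longrightarrow> x \<le> z \<Longrightarrow> x \<in> Iab a b"
  unfolding Iab_def by (metis (mono_tags) ereal_less_eq(3) le_less_trans less_le_trans mem_Collect_eq)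

lemma is_interval_Iab: "is_interval (Iab a b)"
  unfolding is_interval_1 using Iab_between by blast

lemma atLeastAtMost_subset_Iab: "y \<in> Iab a b \<Longrightarrow> z \<in> Iab a b \<Longrightarrow> {y..z} \<subseteq> Iab a b"
  by (auto intro: Iab_between[of y a b z])

lemma Iab_less: "c \<in> Iab a b \<Longrightarrow> a < b"
  unfolding Iab_def by (auto dest: less_trans)

lemma Iab_subset_right: "c \<in> Iab a b \<Longrightarrow> Iab (ereal c) b \<subseteq> Iab a b"
  unfolding Iab_def by auto (meson less_ereal.simps(1) less_trans)

lemma Iab_subset_left: "c \<in> Iab a b \<Longrightarrow> Iab a (ereal c) \<subseteq> Iab a b"
  unfolding Iab_def by auto (meson less_ereal.simps(1) less_trans)

lemma Iab_eq_einterval: "Iab a b = einterval a b"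
  by (simp add: Iab_def einterval_def)

lemma open_Iab: "open (Iab a b)"
  by (simp add: Iab_eq_einterval)

lemma sets_Iab [measurable]: "Iab a b \<in> sets borel"
  by (simp add: Iab_eq_einterval)

lemma Iab_obtain_less:
  assumes "x \<in> Iab a b" obtains y where "y \<in> Iab a b" "y < x"
proof -
  obtain e where e: "0 < e" "ball x e \<subseteq> Iab a b" using open_Iab assms by (meson openE)
  have "x - e / 2 \<in> ball x e" using e by (simp add: dist_real_def)
  then show ?thesis using that[of "x - e / 2"] e by (auto dest!: subsetD)
qed

lemma Iab_obtain_greater:
  assumes "x \<in> Iab a b" obtains y where "y \<in> Iab a b" "x < y"
proof -
  obtain e where e: "0 < e" "ball x e \<subseteq> Iab a b" using open_Iab assms by (meson openE)
  have "x + e / 2 \<in> ball x e" using e by (simp add: dist_real_def)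
  then show ?thesis using that[of "x + e / 2"] e by (auto dest!: subsetD)
qed

lemma eventually_below_at_left_end:
  assumes "w \<in> Iab a b"
  shows "eventually (\<lambda>y. y \<in> Iab a b \<and> y < w) (at_left_end a)"
proof -
  have "eventually (\<lambda>y. a < ereal y \<and> y < w) (at_left_end a)"
  proof (cases a)
    case (real r)
    then have "r < w" using assms by (simp add: Iab_iff)
    then have "eventually (\<lambda>y. y \<in> {r<..<w}) (at_right r)" by (rule eventually_at_right_real)
    then show ?thesis using real by (simp add: at_left_end_def)
  next
    case MInf
    then show ?thesis by (simp add: at_left_end_def)
  next
    case PInf
    then show ?thesis using assms by (simp add: Iab_iff)
  qed
  then show ?thesis
  proof eventually_elim
    case (elim y)
    have "ereal y < ereal w" using elim by simp
    also have "ereal w < b" using assms by (simp add: Iab_iff)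
    finally show ?case using elim by (simp add: Iab_iff)
  qed
qed

lemma eventually_at_left_end:
  assumes "a < b"
  shows "eventually P (at_left_end a) \<longleftrightarrow> (\<exists>w\<in>Iab a b. \<forall>y\<in>Iab a b. y < w \<longrightarrow> P y)"
proof
  assume ev: "eventually P (at_left_end a)"
  show "\<exists>w\<in>Iab a b. \<forall>y\<in>Iab a b. y < w \<longrightarrow> P y"
  proof (cases "a = -\<infinity>")
    case True
    then obtain N where N: "\<forall>y<N. P y" using ev by (auto simp: at_left_end_def eventually_at_bot_dense)
    obtain c where "ereal c < b" using ereal_dense2[OF assms] by blast
    define w where "w = min c (N - 1)"
    have "ereal w < b" using \<open>ereal c < b\<close> by (rule le_less_trans[rotated]) (simp only: w_def ereal_less_eq(3) min.cobounded1)
    then have "w \<in> Iab a b" using True by (simp add: Iab_iff)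
    moreover have "\<forall>y\<in>Iab a b. y < w \<longrightarrow> P y" using N by (simp add: w_def)
    ultimately show ?thesis by blast
  next
    case False
    then obtain r where r: "a = ereal r" using assms by (cases a) auto
    then obtain d where d: "r < d" "\<forall>y>r. y < d \<longrightarrow> P y" using ev
      by (auto simp: at_left_end_def eventually_at_right_field)
    have "ereal r < min (ereal d) b" using d assms r by auto
    then obtain w where w: "ereal r < ereal w" "ereal w < min (ereal d) b" using ereal_dense2 by blast
    then have "w \<in> Iab a b" using r by (simp add: Iab_iff)
    moreover have "\<forall>y\<in>Iab a b. y < w \<longrightarrow> P y" using w r d(2) by (simp add: Iab_iff)
    ultimately show ?thesis by blast
  qed
next
  assume "\<exists>w\<in>Iab a b. \<forall>y\<in>Iab a b. y < w \<longrightarrow> P y"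
  then obtain w where w: "w \<in> Iab a b" "\<forall>y\<in>Iab a b. y < w \<longrightarrow> P y" by blast
  from eventually_below_at_left_end[OF w(1)] show "eventually P (at_left_end a)"
    by eventually_elim (use w(2) in blast)
qed

lemma eventually_above_at_right_end:
  assumes "w \<in> Iab a b"
  shows "eventually (\<lambda>y. y \<in> Iab a b \<and> w < y) (at_right_end b)"
proof -
  have "eventually (\<lambda>y. w < y \<and> ereal y < b) (at_right_end b)"
  proof (cases b)
    case (real r)
    then have "w < r" using assms by (simp add: Iab_iff)
    then have "eventually (\<lambda>y. y \<in> {w<..<r}) (at_left r)" by (rule eventually_at_left_real)
    then show ?thesis using real by (simp add: at_right_end_def)
  next
    case PInf
    then show ?thesis by (simp add: at_right_end_def)
  next
    case MInf
    then show ?thesis using assms by (simp add: Iab_iff)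
  qed
  then show ?thesis
  proof eventually_elim
    case (elim y)
    have "a < ereal w" using assms by (simp add: Iab_iff)
    also have "ereal w < ereal y" using elim by simp
    finally show ?case using elim by (simp add: Iab_iff)
  qed
qed

lemma eventually_at_right_end:
  assumes "a < b"
  shows "eventually P (at_right_end b) \<longleftrightarrow> (\<exists>w\<in>Iab a b. \<forall>y\<in>Iab a b. w < y \<longrightarrow> P y)"
proof
  assume ev: "eventually P (at_right_end b)"
  show "\<exists>w\<in>Iab a b. \<forall>y\<in>Iab a b. w < y \<longrightarrow> P y"
  proof (cases "b = \<infinity>")
    case True
    then obtain N where N: "\<forall>y>N. P y" using ev by (auto simp: at_right_end_def eventually_at_top_dense)
    obtain c where "a < ereal c" using ereal_dense2[OF assms] by blast
    define w where "w = max c (N + 1)"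
    have "a < ereal w" using \<open>a < ereal c\<close> by (rule less_le_trans) (simp only: w_def ereal_less_eq(3) max.cobounded1)
    then have "w \<in> Iab a b" using True by (simp add: Iab_iff)
    moreover have "\<forall>y\<in>Iab a b. w < y \<longrightarrow> P y" using N by (simp add: w_def)
    ultimately show ?thesis by blast
  next
    case False
    then obtain r where r: "b = ereal r" using assms by (cases b) auto
    then obtain d where d: "d < r" "\<forall>y>d. y < r \<longrightarrow> P y" using ev
      by (auto simp: at_right_end_def eventually_at_left_field)
    have "max (ereal d) a < ereal r" using d assms r by auto
    then obtain w where w: "max (ereal d) a < ereal w" "ereal w < ereal r" using ereal_dense2 by blast
    then have "w \<in> Iab a b" using r by (simp add: Iab_iff)
    moreover have "\<forall>y\<in>Iab a b. w < y \<longrightarrow> P y" using w r d(2) by (simp add: Iab_iff)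
    ultimately show ?thesis by blast
  qed
next
  assume "\<exists>w\<in>Iab a b. \<forall>y\<in>Iab a b. w < y \<longrightarrow> P y"
  then obtain w where w: "w \<in> Iab a b" "\<forall>y\<in>Iab a b. w < y \<longrightarrow> P y" by blast
  from eventually_above_at_right_end[OF w(1)] show "eventually P (at_right_end b)"
    by eventually_elim (use w(2) in blast)
qed

lemma eventually_upward_at_right_end:
  assumes "a < b" "eventually P (at_right_end b)"
  shows "eventually (\<lambda>u. u \<in> Iab a b \<and> (\<forall>x\<in>Iab a b. u \<le> x \<longrightarrow> P x)) (at_right_end b)"
proof -
  obtain w where w: "w \<in> Iab a b" "\<forall>y\<in>Iab a b. w < y \<longrightarrow> P y"
    using assms unfolding eventually_at_right_end[OF assms(1)] by blast
  from eventually_above_at_right_end[OF w(1)] show ?thesis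
  proof eventually_elim
    case (elim u)
    have "P x" if "x \<in> Iab a b" "u \<le> x" for x
      using w(2) that elim less_le_trans by blast
    then show ?case using elim by blast
  qed
qed

text \<open>Both \<open>at_left_end a\<close> and \<open>at_right_end b\<close> are end filters of \<open>Iab a b\<close>, so the
  mean value arguments below are done once for both ends.\<close>
definition end_filter :: "real set \<Rightarrow> real filter \<Rightarrow> bool" where
  "end_filter I F \<longleftrightarrow> F \<noteq> bot \<and> (\<forall>w\<in>I. eventually (\<lambda>y. y \<noteq> w) F) \<and>
     (\<forall>P. eventually P F \<longrightarrow>
        (\<exists>C \<subseteq> I. is_interval C \<and> eventually (\<lambda>y. y \<in> C) F \<and> (\<forall>y\<in>C. P y)))"

lemma end_filter_at_left_end:
  assumes "a < b"
  shows "end_filter (Iab a b) (at_left_end a)"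
  unfolding end_filter_def
proof (intro conjI ballI allI impI)
  show "at_left_end a \<noteq> bot" by (simp add: at_left_end_def)
next
  fix w assume "w \<in> Iab a b"
  then show "eventually (\<lambda>y. y \<noteq> w) (at_left_end a)"
    unfolding eventually_at_left_end[OF assms] by (intro bexI[of _ w]) auto
next
  fix P assume "eventually P (at_left_end a)"
  then obtain w where w: "w \<in> Iab a b" "\<forall>y\<in>Iab a b. y < w \<longrightarrow> P y"
    unfolding eventually_at_left_end[OF assms] by blast
  let ?C = "{y \<in> Iab a b. y < w}"
  have "is_interval ?C"
    using is_interval_Int[OF is_interval_Iab is_interval_io] by (simp add: Int_def)
  moreover have "eventually (\<lambda>y. y \<in> ?C) (at_left_end a)"
    unfolding eventually_at_left_end[OF assms] using w(1) by (intro bexI[of _ w]) auto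
  ultimately show "\<exists>C \<subseteq> Iab a b. is_interval C \<and> eventually (\<lambda>y. y \<in> C) (at_left_end a) \<and> (\<forall>y\<in>C. P y)"
    using w(2) by (intro exI[of _ ?C] conjI) auto
qed

lemma end_filter_at_right_end:
  assumes "a < b"
  shows "end_filter (Iab a b) (at_right_end b)"
  unfolding end_filter_def
proof (intro conjI ballI allI impI)
  show "at_right_end b \<noteq> bot" by (simp add: at_right_end_def)
next
  fix w assume "w \<in> Iab a b"
  then show "eventually (\<lambda>y. y \<noteq> w) (at_right_end b)"
    unfolding eventually_at_right_end[OF assms] by (intro bexI[of _ w]) auto
next
  fix P assume "eventually P (at_right_end b)"
  then obtain w where w: "w \<in> Iab a b" "\<forall>y\<in>Iab a b. w < y \<longrightarrow> P y"
    unfolding eventually_at_right_end[OF assms] by blast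
  let ?C = "{y \<in> Iab a b. w < y}"
  have "is_interval ?C"
    using is_interval_Int[OF is_interval_Iab is_interval_oi] by (simp add: Int_def)
  moreover have "eventually (\<lambda>y. y \<in> ?C) (at_right_end b)"
    unfolding eventually_at_right_end[OF assms] using w(1) by (intro bexI[of _ w]) auto
  ultimately show "\<exists>C \<subseteq> Iab a b. is_interval C \<and> eventually (\<lambda>y. y \<in> C) (at_right_end b) \<and> (\<forall>y\<in>C. P y)"
    using w(2) by (intro exI[of _ ?C] conjI) auto
qed

section \<open>L'Hospital's rule at an end of an interval\<close>

lemma divide_diff_swap: "((a::real) - b) / (c - d) = (b - a) / (d - c)"
  by (metis minus_diff_eq minus_divide_divide)

lemma difference_quotient_eq_derivative_quotient:
  fixes f g f' g' :: "real \<Rightarrow> real"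
  assumes C: "is_interval C"
    and f: "\<And>x. x \<in> C \<Longrightarrow> (f has_real_derivative f' x) (at x)"
    and g: "\<And>x. x \<in> C \<Longrightarrow> (g has_real_derivative g' x) (at x)"
    and g'_pos: "\<And>x. x \<in> C \<Longrightarrow> 0 < g' x"
    and yz: "y \<in> C" "z \<in> C" "y \<noteq> z"
  obtains \<xi> where "\<xi> \<in> C" "(f z - f y) / (g z - g y) = f' \<xi> / g' \<xi>"
proof -
  have ordered: "\<exists>\<xi>\<in>C. (f v - f u) / (g v - g u) = f' \<xi> / g' \<xi>"
    if uv: "u \<in> C" "v \<in> C" "u < v" for u v
  proof -
    have sub: "x \<in> C" if "u \<le> x" "x \<le> v" for x
      using C uv that unfolding is_interval_1 by blast
    have "\<exists>\<xi>. u < \<xi> \<and> \<xi> < v \<and> (f v - f u) * g' \<xi> = (g v - g u) * f' \<xi>"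
    proof (rule GMVT'[OF \<open>u < v\<close>])
      fix x assume "u \<le> x" "x \<le> v"
      then show "isCont f x" "isCont g x" using sub f g DERIV_isCont by blast+
    next
      fix x assume "u < x" "x < v"
      then show "(f has_real_derivative f' x) (at x)" "(g has_real_derivative g' x) (at x)"
        using sub f g by simp_all
    qed
    then obtain \<xi> where \<xi>: "u < \<xi>" "\<xi> < v" "(f v - f u) * g' \<xi> = (g v - g u) * f' \<xi>"
      by blast
    have "g u < g v"
      using DERIV_pos_imp_increasing[OF \<open>u < v\<close>] sub g g'_pos by blast
    moreover have "0 < g' \<xi>" using g'_pos sub \<xi>(1,2) by simp
    ultimately have "(f v - f u) / (g v - g u) = f' \<xi> / g' \<xi>"
      using \<xi>(3) by (simp add: field_simps)
    then show ?thesis using sub \<xi>(1,2) by auto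
  qed
  consider "y < z" | "z < y" using yz(3) by linarith
  then show ?thesis
  proof cases
    case 1
    then show ?thesis using ordered[OF yz(1,2)] that by blast
  next
    case 2
    then obtain \<xi> where "\<xi> \<in> C" "(f y - f z) / (g y - g z) = f' \<xi> / g' \<xi>"
      using ordered[OF yz(2,1)] by blast
    then show ?thesis using that divide_diff_swap[of "f y" "f z" "g y" "g z"] by simp
  qed
qed

lemma eventually_difference_quotient_pairs:
  fixes f g f' g' :: "real \<Rightarrow> real"
  assumes F: "end_filter I F"
    and f: "\<And>x. x \<in> I \<Longrightarrow> (f has_real_derivative f' x) (at x)"
    and g: "\<And>x. x \<in> I \<Longrightarrow> (g has_real_derivative g' x) (at x)"
    and g'_pos: "\<And>x. x \<in> I \<Longrightarrow> 0 < g' x"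
    and ev: "eventually (\<lambda>x. P (f' x / g' x)) F"
  shows "eventually (\<lambda>(y, z). P ((f z - f y) / (g z - g y)))
           (inf (F \<times>\<^sub>F F) (principal {(y, z). y < z}))"
proof -
  obtain C where C: "C \<subseteq> I" "is_interval C" "eventually (\<lambda>x. x \<in> C) F" "\<forall>x\<in>C. P (f' x / g' x)"
    using F ev unfolding end_filter_def by blast
  have "P ((f z - f y) / (g z - g y))" if "y \<in> C" "z \<in> C" "y < z" for y z
    using difference_quotient_eq_derivative_quotient[OF C(2), of f f' g g' y z] C(1,4) f g g'_pos that
    by (metis less_irrefl subsetD)
  then have "\<forall>\<^sub>F (y, z) in F \<times>\<^sub>F F. y < z \<longrightarrow> P ((f z - f y) / (g z - g y))"
    unfolding eventually_prod_same using C(3) by blast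
  then show ?thesis by (simp add: eventually_inf_principal case_prod_unfold)
qed

lemma eventually_difference_quotient_anchor:
  fixes f g f' g' :: "real \<Rightarrow> real"
  assumes F: "end_filter I F"
    and f: "\<And>x. x \<in> I \<Longrightarrow> (f has_real_derivative f' x) (at x)"
    and g: "\<And>x. x \<in> I \<Longrightarrow> (g has_real_derivative g' x) (at x)"
    and g'_pos: "\<And>x. x \<in> I \<Longrightarrow> 0 < g' x"
    and ev: "eventually (\<lambda>x. P (f' x / g' x)) F"
  obtains w where "eventually (\<lambda>y. P ((f y - f w) / (g y - g w))) F"
proof -
  obtain C where C: "C \<subseteq> I" "is_interval C" "eventually (\<lambda>x. x \<in> C) F" "\<forall>x\<in>C. P (f' x / g' x)"
    using F ev unfolding end_filter_def by blast
  obtain w where w: "w \<in> C" using eventually_happens'[OF _ C(3)] F by (auto simp: end_filter_def)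
  have "eventually (\<lambda>y. y \<in> C \<and> y \<noteq> w) F"
    using C(1,3) F w by (auto simp: end_filter_def intro: eventually_conj)
  then have "eventually (\<lambda>y. P ((f y - f w) / (g y - g w))) F"
  proof eventually_elim
    case (elim y)
    then show ?case
      using difference_quotient_eq_derivative_quotient[OF C(2), of f f' g g' w y] C(1,4) f g g'_pos w
      by (metis subsetD)
  qed
  then show ?thesis by (rule that)
qed

text \<open>With \<open>D = g y - B\<close>, \<open>q = (g w - B) / D \<rightarrow> 0\<close> and \<open>r\<close> the quotient anchored at
  \<open>w\<close>: \<open>(f y - A) / D = c + K / D + (r - c) (1 - q)\<close> with a constant \<open>K\<close>.\<close>
lemma eventually_shifted_quotient_gt:
  fixes f g :: "'a \<Rightarrow> real"
  assumes ev: "eventually (\<lambda>y. c \<le> (f y - f w) / (g y - g w)) F"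
    and g: "filterlim g at_infinity F" and "m < c"
  shows "eventually (\<lambda>y. m < (f y - A) / (g y - B)) F"
proof -
  define D where "D = (\<lambda>y. g y - B)"
  define K where "K = f w - A - c * (g w - B)"
  have D: "filterlim D at_infinity F"
    using tendsto_add_filterlim_at_infinity[OF tendsto_const[of "- B"] g] by (simp add: D_def)
  have "((\<lambda>y. (g w - B) / D y) \<longlongrightarrow> 0) F" by (rule tendsto_divide_0[OF tendsto_const D])
  then have "eventually (\<lambda>y. (g w - B) / D y < 1) F" by (rule order_tendstoD) simp
  moreover have "((\<lambda>y. K / D y) \<longlongrightarrow> 0) F" by (rule tendsto_divide_0[OF tendsto_const D])
  then have "eventually (\<lambda>y. m - c < K / D y) F" by (rule order_tendstoD) (use \<open>m < c\<close> in simp)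
  moreover have "eventually (\<lambda>y. D y \<noteq> 0) F" by (rule filterlim_at_infinity_imp_eventually_ne[OF D])
  ultimately show ?thesis using ev
  proof eventually_elim
    case (elim y)
    define q where "q = (g w - B) / D y"
    define r where "r = (f y - f w) / (g y - g w)"
    have q: "0 < 1 - q" using elim by (simp add: q_def)
    have E: "g y - g w = D y * (1 - q)" using elim by (simp add: q_def D_def field_simps)
    then have "g y - g w \<noteq> 0" using q elim by simp
    then have "r * (1 - q) = (f y - f w) / D y"
      using E elim by (simp add: r_def)
    then have "(f y - A) / D y = r * (1 - q) + (f w - A) / D y"
      by (simp add: add_divide_distrib[symmetric])
    also have "\<dots> \<ge> c * (1 - q) + (f w - A) / D y"
    proof -
      have "c * (1 - q) \<le> r * (1 - q)"
        using elim q by (intro mult_right_mono) (simp_all add: r_def)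
      then show ?thesis by simp
    qed
    also have "c * (1 - q) + (f w - A) / D y = c + K / D y"
      using elim by (simp add: q_def K_def field_simps)
    finally show ?case using elim unfolding D_def by linarith
  qed
qed

lemma lhopital_end_eventually_gt:
  fixes f g f' g' :: "real \<Rightarrow> real"
  assumes F: "end_filter I F"
    and f: "\<And>x. x \<in> I \<Longrightarrow> (f has_real_derivative f' x) (at x)"
    and g: "\<And>x. x \<in> I \<Longrightarrow> (g has_real_derivative g' x) (at x)"
    and g'_pos: "\<And>x. x \<in> I \<Longrightarrow> 0 < g' x"
    and lim: "((\<lambda>x. ereal (f' x / g' x)) \<longlongrightarrow> L) F"
    and g_infinity: "filterlim g at_infinity F"
    and "M < L"
  shows "eventually (\<lambda>y. M < ereal ((f y - A) / (g y - B))) F"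
proof (cases M)
  case (real m)
  obtain c where c: "ereal m < ereal c" "ereal c < L" using ereal_dense2 \<open>M < L\<close> real by blast
  have "eventually (\<lambda>x. c < f' x / g' x) F" using order_tendstoD(1)[OF lim c(2)] by simp
  then obtain w where "eventually (\<lambda>y. c < (f y - f w) / (g y - g w)) F"
    using eventually_difference_quotient_anchor[where P = "\<lambda>r. c < r", OF F f g g'_pos] by blast
  then have "eventually (\<lambda>y. c \<le> (f y - f w) / (g y - g w)) F"
    by (rule eventually_mono) simp
  from eventually_shifted_quotient_gt[OF this g_infinity, of m A B]
  show ?thesis using c(1) real by simp
qed (use \<open>M < L\<close> in simp_all)

lemma lhopital_end:
  fixes f g f' g' :: "real \<Rightarrow> real"
  assumes F: "end_filter I F"
    and f: "\<And>x. x \<in> I \<Longrightarrow> (f has_real_derivative f' x) (at x)"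
    and g: "\<And>x. x \<in> I \<Longrightarrow> (g has_real_derivative g' x) (at x)"
    and g'_pos: "\<And>x. x \<in> I \<Longrightarrow> 0 < g' x"
    and lim: "((\<lambda>x. ereal (f' x / g' x)) \<longlongrightarrow> L) F"
    and g_infinity: "filterlim g at_infinity F"
  shows "((\<lambda>y. ereal ((f y - A) / (g y - B))) \<longlongrightarrow> L) F"
proof (rule order_tendstoI)
  fix M assume "M < L"
  then show "eventually (\<lambda>y. M < ereal ((f y - A) / (g y - B))) F"
    using lhopital_end_eventually_gt[OF F f g g'_pos lim g_infinity] by blast
next
  fix M assume "L < M"
  have f_neg: "((\<lambda>y. - f y) has_real_derivative - f' x) (at x)" if "x \<in> I" for x
    using f[OF that] by (rule DERIV_minus)
  have "((\<lambda>x. ereal (- f' x / g' x)) \<longlongrightarrow> - L) F"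
    using tendsto_uminus_ereal[OF lim] by simp
  moreover have "- M < - L" using \<open>L < M\<close> by simp
  ultimately have "eventually (\<lambda>y. - M < ereal ((- f y - - A) / (g y - B))) F"
    using lhopital_end_eventually_gt[OF F f_neg g g'_pos _ g_infinity] by blast
  then show "eventually (\<lambda>y. ereal ((f y - A) / (g y - B)) < M) F"
  proof (rule eventually_mono)
    fix y assume "- M < ereal ((- f y - - A) / (g y - B))"
    also have "(- f y - - A) / (g y - B) = - ((f y - A) / (g y - B))"
      by (simp add: minus_divide_left)
    finally show "ereal ((f y - A) / (g y - B)) < M"
      using ereal_uminus_less_reorder[of M] by simp
  qed
qed

lemma lhopital_end_pairs:
  fixes f g f' g' :: "real \<Rightarrow> real"
  assumes F: "end_filter I F"
    and f: "\<And>x. x \<in> I \<Longrightarrow> (f has_real_derivative f' x) (at x)"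
    and g: "\<And>x. x \<in> I \<Longrightarrow> (g has_real_derivative g' x) (at x)"
    and g'_pos: "\<And>x. x \<in> I \<Longrightarrow> 0 < g' x"
    and lim: "((\<lambda>x. ereal (f' x / g' x)) \<longlongrightarrow> L) F"
  shows "((\<lambda>(y, z). ereal ((f z - f y) / (g z - g y))) \<longlongrightarrow> L)
           (inf (F \<times>\<^sub>F F) (principal {(y, z). y < z}))"
proof (rule order_tendstoI)
  fix M assume "M < L"
  then have "eventually (\<lambda>x. M < ereal (f' x / g' x)) F" by (rule order_tendstoD(1)[OF lim])
  from eventually_difference_quotient_pairs[OF F f g g'_pos this]
  show "eventually (\<lambda>p. M < (\<lambda>(y, z). ereal ((f z - f y) / (g z - g y))) p)
          (inf (F \<times>\<^sub>F F) (principal {(y, z). y < z}))"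
    by (simp add: case_prod_unfold)
next
  fix M assume "L < M"
  then have "eventually (\<lambda>x. ereal (f' x / g' x) < M) F" by (rule order_tendstoD(2)[OF lim])
  from eventually_difference_quotient_pairs[OF F f g g'_pos this]
  show "eventually (\<lambda>p. (\<lambda>(y, z). ereal ((f z - f y) / (g z - g y))) p < M)
          (inf (F \<times>\<^sub>F F) (principal {(y, z). y < z}))"
    by (simp add: case_prod_unfold)
qed

lemma filterlim_at_top_of_quotient:
  fixes f g :: "'a \<Rightarrow> real"
  assumes lim: "((\<lambda>x. ereal (f x / g x)) \<longlongrightarrow> L) F" and "0 < L"
    and g: "filterlim g at_top F"
  shows "filterlim f at_top F"
proof -
  obtain c where c: "0 < ereal c" "ereal c < L" using ereal_dense2[OF \<open>0 < L\<close>] by blast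
  have "eventually (\<lambda>x. c < f x / g x) F" using order_tendstoD(1)[OF lim c(2)] by simp
  moreover have "eventually (\<lambda>x. 0 < g x) F" using g by (simp add: filterlim_at_top_dense)
  ultimately have "eventually (\<lambda>x. c * g x \<le> f x) F"
    by eventually_elim (simp add: pos_less_divide_eq less_imp_le)
  moreover have "filterlim (\<lambda>x. c * g x) at_top F"
    using c(1) by (intro filterlim_tendsto_pos_mult_at_top[OF tendsto_const _ g]) simp
  ultimately show ?thesis by (rule filterlim_at_top_mono[rotated])
qed

lemma filterlim_at_bot_of_quotient:
  fixes f g :: "'a \<Rightarrow> real"
  assumes lim: "((\<lambda>x. ereal (f x / g x)) \<longlongrightarrow> L) F" and "0 < L"
    and g: "filterlim g at_bot F"
  shows "filterlim f at_bot F"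
proof -
  have "((\<lambda>x. ereal (- f x / - g x)) \<longlongrightarrow> L) F" using lim by simp
  moreover have "filterlim (\<lambda>x. - g x) at_top F" using g by (simp add: filterlim_uminus_at_bot)
  ultimately have "filterlim (\<lambda>x. - f x) at_top F" by (rule filterlim_at_top_of_quotient[OF _ \<open>0 < L\<close>])
  then show ?thesis by (simp add: filterlim_uminus_at_bot)
qed

section \<open>Integrals over subintervals and tail integrals\<close>

lemma sint_eq_integral_diff:
  fixes k :: "real \<Rightarrow> real"
  assumes int: "k integrable_on {c..d}" and uv: "c \<le> u" "c \<le> v" "u \<le> d" "v \<le> d"
  shows "sint k u v = integral {c..v} k - integral {c..u} k"
proof (cases "u \<le> v")
  case True
  have "k integrable_on {c..v}" by (rule integrable_on_subinterval[OF int]) (use uv in auto)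
  then have "integral {c..u} k + integral {u..v} k = integral {c..v} k"
    using Henstock_Kurzweil_Integration.integral_combine[of c u v k] True uv by simp
  then show ?thesis using True by (simp add: sint_def)
next
  case False
  have "k integrable_on {c..u}" by (rule integrable_on_subinterval[OF int]) (use uv in auto)
  then have "integral {c..v} k + integral {v..u} k = integral {c..u} k"
    using Henstock_Kurzweil_Integration.integral_combine[of c v u k] False uv by simp
  then show ?thesis using False by (simp add: sint_def)
qed

lemma sint_has_real_derivative:
  fixes k :: "real \<Rightarrow> real"
  assumes k: "continuous_on (Iab a b) k" and x0: "x0 \<in> Iab a b" and x: "x \<in> Iab a b"
  shows "((\<lambda>t. sint k x0 t) has_real_derivative k x) (at x)"
proof -
  have "min x x0 \<in> Iab a b" using x x0 by (simp add: min_def)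
  then obtain c where c: "c \<in> Iab a b" "c < min x x0" by (rule Iab_obtain_less)
  have "max x x0 \<in> Iab a b" using x x0 by (simp add: max_def)
  then obtain d where d: "d \<in> Iab a b" "max x x0 < d" by (rule Iab_obtain_greater)
  have cd: "continuous_on {c..d} k"
    using continuous_on_subset[OF k atLeastAtMost_subset_Iab[OF c(1) d(1)]] .
  have "((\<lambda>t. integral {c..t} k) has_real_derivative k x) (at x within {c..d})"
    using integral_has_real_derivative[OF cd, of x] c d by simp
  moreover have "at x within {c..d} = at x"
    using c d by (intro at_within_interior) simp
  ultimately have "((\<lambda>t. integral {c..t} k - integral {c..x0} k) has_real_derivative k x) (at x)"
    by (auto intro!: derivative_eq_intros)
  then show ?thesis
  proof (rule has_field_derivative_transform_within_open)
    show "x \<in> {c<..<d}" "open {c<..<d}" using c d by auto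
    fix t assume "t \<in> {c<..<d}"
    then show "integral {c..t} k - integral {c..x0} k = sint k x0 t"
      using sint_eq_integral_diff[OF integrable_continuous_interval[OF cd], of x0 t] c d by simp
  qed
qed

lemma borel_measurable_restrict_Iab:
  assumes "continuous_on (Iab a b) h"
  shows "(\<lambda>x. ennreal (indicator (Iab a b) x * h x)) \<in> borel_measurable lborel"
proof -
  have "(\<lambda>x. indicator (Iab a b) x *\<^sub>R h x) \<in> borel_measurable borel"
    using borel_measurable_continuous_on_indicator[OF sets_Iab assms] .
  then show ?thesis by simp
qed

lemma nn_set_integral_restrict_Iab:
  assumes "A \<subseteq> Iab a b"
  shows "(\<integral>\<^sup>+x\<in>A. ennreal (h x) \<partial>lborel) = (\<integral>\<^sup>+x\<in>A. ennreal (indicator (Iab a b) x * h x) \<partial>lborel)"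
  using assms by (intro nn_integral_cong) (auto split: split_indicator)

lemma nn_set_integral_cmult_Iab:
  assumes h: "continuous_on (Iab a b) h" and A: "A \<subseteq> Iab a b" "A \<in> sets lborel" and "0 \<le> c"
  shows "(\<integral>\<^sup>+x\<in>A. ennreal (c * h x) \<partial>lborel) = ennreal c * (\<integral>\<^sup>+x\<in>A. ennreal (h x) \<partial>lborel)"
proof -
  have "(\<integral>\<^sup>+x\<in>A. ennreal (c * h x) \<partial>lborel)
      = (\<integral>\<^sup>+x. ennreal c * (ennreal (indicator (Iab a b) x * h x) * indicator A x) \<partial>lborel)"
    using A(1) \<open>0 \<le> c\<close> by (intro nn_integral_cong) (auto split: split_indicator simp: ennreal_mult')
  also have "\<dots> = ennreal c * (\<integral>\<^sup>+x\<in>A. ennreal (indicator (Iab a b) x * h x) \<partial>lborel)"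
    by (rule nn_integral_cmult) (use borel_measurable_restrict_Iab[OF h] A(2) in measurable)
  finally show ?thesis using nn_set_integral_restrict_Iab[OF A(1)] by simp
qed

lemma nn_set_integral_Iab_le:
  assumes h: "continuous_on (Iab a b) h"
    and bound: "\<And>y z. y \<in> Iab a b \<Longrightarrow> z \<in> Iab a b \<Longrightarrow> (\<integral>\<^sup>+x\<in>{y..z}. ennreal (h x) \<partial>lborel) \<le> K"
  shows "(\<integral>\<^sup>+x\<in>Iab a b. ennreal (h x) \<partial>lborel) \<le> K"
proof (cases "a < b")
  case False
  then have "Iab a b = {}" unfolding Iab_def by (auto dest: less_trans)
  then show ?thesis by simp
next
  case True
  obtain u l :: "nat \<Rightarrow> real" where lu: "Iab a b = (\<Union>i. {l i .. u i})" "incseq u" "decseq l"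
    using einterval_Icc_approximation[OF True] unfolding Iab_eq_einterval by metis
  define N where "N = density lborel (\<lambda>x. ennreal (indicator (Iab a b) x * h x))"
  have N: "(\<integral>\<^sup>+x\<in>A. ennreal (h x) \<partial>lborel) = emeasure N A" if "A \<subseteq> Iab a b" "A \<in> sets borel" for A
    using that borel_measurable_restrict_Iab[OF h] nn_set_integral_restrict_Iab[OF that(1)]
    unfolding N_def by (simp add: emeasure_density)
  have sub: "{l i .. u i} \<subseteq> Iab a b" for i using lu(1) by blast
  have "incseq (\<lambda>i. {l i .. u i})"
    using lu(2,3) unfolding incseq_def decseq_def by (meson atLeastatMost_subset_iff)
  then have "(SUP i. emeasure N {l i .. u i}) = emeasure N (\<Union>i. {l i .. u i})"
    by (intro SUP_emeasure_incseq) (auto simp: N_def)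
  moreover have "(SUP i. emeasure N {l i .. u i}) \<le> K"
  proof (rule SUP_least)
    fix i
    show "emeasure N {l i .. u i} \<le> K"
    proof (cases "l i \<le> u i")
      case True
      then have "l i \<in> Iab a b" "u i \<in> Iab a b" using sub[of i] by auto
      then show ?thesis using bound[of "l i" "u i"] N[OF sub[of i]] by simp
    qed simp
  qed
  ultimately show ?thesis using N[OF subset_refl sets_Iab] lu(1) by simp
qed

text \<open>\<open>tail_integral a b h u = \<integral>\<^sub>u\<^sup>b h\<close>; through \<open>enn2real\<close> it is \<open>0\<close> if this integral is infinite.\<close>
definition tail_integral :: "ereal \<Rightarrow> ereal \<Rightarrow> (real \<Rightarrow> real) \<Rightarrow> real \<Rightarrow> real" where
  "tail_integral a b h u = enn2real (\<integral>\<^sup>+x\<in>{x\<in>Iab a b. u \<le> x}. ennreal (h x) \<partial>lborel)"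

lemma tail_integral_nonneg: "0 \<le> tail_integral a b h u"
  by (simp add: tail_integral_def)

lemma tail_integral_mono:
  assumes "\<And>x. x \<in> Iab a b \<Longrightarrow> u \<le> x \<Longrightarrow> k x \<le> h x"
    and "(\<integral>\<^sup>+x\<in>{x\<in>Iab a b. u \<le> x}. ennreal (h x) \<partial>lborel) < \<infinity>"
  shows "tail_integral a b k u \<le> tail_integral a b h u"
  unfolding tail_integral_def
  by (rule enn2real_mono[OF nn_integral_mono]) (use assms in \<open>auto split: split_indicator intro: ennreal_leI\<close>)

lemma tail_integral_cmult:
  assumes "continuous_on (Iab a b) h" "0 \<le> c"
  shows "tail_integral a b (\<lambda>x. c * h x) u = c * tail_integral a b h u"
  unfolding tail_integral_def using assms
  by (simp add: nn_set_integral_cmult_Iab enn2real_mult)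

context
  fixes a b :: ereal and h :: "real \<Rightarrow> real"
  assumes h_cont: "continuous_on (Iab a b) h"
    and h_nonneg: "\<And>x. x \<in> Iab a b \<Longrightarrow> 0 \<le> h x"
begin

lemma nn_set_integral_Icc_eq_integral:
  assumes "y \<in> Iab a b" "z \<in> Iab a b"
  shows "(\<integral>\<^sup>+x\<in>{y..z}. ennreal (h x) \<partial>lborel) = ennreal (integral {y..z} h)"
proof (rule nn_integral_has_integral_lebesgue')
  have sub: "{y..z} \<subseteq> Iab a b" using atLeastAtMost_subset_Iab assms by blast
  then show "(h has_integral integral {y..z} h) {y..z}"
    using integrable_continuous_interval[OF continuous_on_subset[OF h_cont sub]]
    by (simp add: has_integral_integral)
  show "0 \<le> h x" if "x \<in> {y..z}" for x using h_nonneg sub that by blast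
qed

lemma nn_set_integral_tail_split:
  assumes u: "u \<in> Iab a b" and v: "v \<in> Iab a b" and "u \<le> v"
  shows "(\<integral>\<^sup>+x\<in>{x\<in>Iab a b. u \<le> x}. ennreal (h x) \<partial>lborel)
       = ennreal (integral {u..v} h) + (\<integral>\<^sup>+x\<in>{x\<in>Iab a b. v \<le> x}. ennreal (h x) \<partial>lborel)"
proof -
  let ?h = "\<lambda>x. ennreal (indicator (Iab a b) x * h x)"
  have sub: "{u..v} \<subseteq> Iab a b" using atLeastAtMost_subset_Iab u v by blast
  have split: "{x\<in>Iab a b. u \<le> x} = {u..<v} \<union> {x\<in>Iab a b. v \<le> x}"
    using sub \<open>u \<le> v\<close> by (auto dest: subsetD[of "{u..v}"])
  have "(\<integral>\<^sup>+x\<in>{x\<in>Iab a b. u \<le> x}. ennreal (h x) \<partial>lborel) = (\<integral>\<^sup>+x\<in>{u..<v} \<union> {x\<in>Iab a b. v \<le> x}. ?h x \<partial>lborel)"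
    unfolding split[symmetric] by (rule nn_set_integral_restrict_Iab) auto
  also have "\<dots> = (\<integral>\<^sup>+x\<in>{u..<v}. ?h x \<partial>lborel) + (\<integral>\<^sup>+x\<in>{x\<in>Iab a b. v \<le> x}. ?h x \<partial>lborel)"
    using borel_measurable_restrict_Iab[OF h_cont] by (intro nn_integral_disjoint_pair) auto
  also have "(\<integral>\<^sup>+x\<in>{u..<v}. ?h x \<partial>lborel) = (\<integral>\<^sup>+x\<in>{u..v}. ?h x \<partial>lborel)"
  proof (rule nn_integral_cong_AE)
    show "AE x in lborel. ?h x * indicator {u..<v} x = ?h x * indicator {u..v} x"
      using AE_lborel_singleton[of v] by eventually_elim (simp split: split_indicator)
  qed
  also have "\<dots> = ennreal (integral {u..v} h)"
    using nn_set_integral_restrict_Iab[OF sub] nn_set_integral_Icc_eq_integral[OF u v] by simp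
  finally show ?thesis using nn_set_integral_restrict_Iab[of "{x\<in>Iab a b. v \<le> x}" a b h] by auto
qed

lemma filterlim_integral_at_right_end:
  assumes c: "c \<in> Iab a b"
    and infinite: "(\<integral>\<^sup>+x\<in>{x\<in>Iab a b. c \<le> x}. ennreal (h x) \<partial>lborel) = \<infinity>"
  shows "filterlim (\<lambda>z. integral {c..z} h) at_top (at_right_end b)"
  unfolding filterlim_at_top
proof
  fix K :: real
  have ab: "a < b" using Iab_less[OF c] .
  have sub: "Iab (ereal c) b \<subseteq> Iab a b" using Iab_subset_right[OF c] .
  have "AE x in lborel. ennreal (h x) * indicator {x\<in>Iab a b. c \<le> x} x \<le> ennreal (h x) * indicator (Iab (ereal c) b) x"
    using AE_lborel_singleton[of c] by eventually_elim (auto split: split_indicator simp: Iab_iff)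
  then have "(\<integral>\<^sup>+x\<in>{x\<in>Iab a b. c \<le> x}. ennreal (h x) \<partial>lborel) \<le> (\<integral>\<^sup>+x\<in>Iab (ereal c) b. ennreal (h x) \<partial>lborel)"
    by (rule nn_integral_mono_AE)
  then have "\<not> (\<integral>\<^sup>+x\<in>Iab (ereal c) b. ennreal (h x) \<partial>lborel) \<le> ennreal K"
    using infinite by (auto simp: top_unique)
  then obtain y z where yz: "y \<in> Iab (ereal c) b" "z \<in> Iab (ereal c) b"
    "ennreal K < (\<integral>\<^sup>+x\<in>{y..z}. ennreal (h x) \<partial>lborel)"
    using nn_set_integral_Iab_le[OF continuous_on_subset[OF h_cont sub]] by (meson not_le)
  show "eventually (\<lambda>t. K \<le> integral {c..t} h) (at_right_end b)"
    unfolding eventually_at_right_end[OF ab]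
  proof (intro bexI ballI impI)
    fix t assume t: "t \<in> Iab a b" "z < t"
    note yz(3)
    also have "(\<integral>\<^sup>+x\<in>{y..z}. ennreal (h x) \<partial>lborel) \<le> (\<integral>\<^sup>+x\<in>{c..t}. ennreal (h x) \<partial>lborel)"
      using yz(1) t(2) by (intro nn_set_integral_set_mono) (auto simp: Iab_iff)
    also have "\<dots> = ennreal (integral {c..t} h)" by (rule nn_set_integral_Icc_eq_integral[OF c t(1)])
    finally show "K \<le> integral {c..t} h" by (meson ennreal_leI not_le less_imp_le)
  qed (use sub yz(2) in blast)
qed

lemma filterlim_integral_at_left_end:
  assumes c: "c \<in> Iab a b"
    and infinite: "(\<integral>\<^sup>+x\<in>{x\<in>Iab a b. x \<le> c}. ennreal (h x) \<partial>lborel) = \<infinity>"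
  shows "filterlim (\<lambda>y. integral {y..c} h) at_top (at_left_end a)"
  unfolding filterlim_at_top
proof
  fix K :: real
  have ab: "a < b" using Iab_less[OF c] .
  have sub: "Iab a (ereal c) \<subseteq> Iab a b" using Iab_subset_left[OF c] .
  have "AE x in lborel. ennreal (h x) * indicator {x\<in>Iab a b. x \<le> c} x \<le> ennreal (h x) * indicator (Iab a (ereal c)) x"
    using AE_lborel_singleton[of c] by eventually_elim (auto split: split_indicator simp: Iab_iff)
  then have "(\<integral>\<^sup>+x\<in>{x\<in>Iab a b. x \<le> c}. ennreal (h x) \<partial>lborel) \<le> (\<integral>\<^sup>+x\<in>Iab a (ereal c). ennreal (h x) \<partial>lborel)"
    by (rule nn_integral_mono_AE)
  then have "\<not> (\<integral>\<^sup>+x\<in>Iab a (ereal c). ennreal (h x) \<partial>lborel) \<le> ennreal K"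
    using infinite by (auto simp: top_unique)
  then obtain y z where yz: "y \<in> Iab a (ereal c)" "z \<in> Iab a (ereal c)"
    "ennreal K < (\<integral>\<^sup>+x\<in>{y..z}. ennreal (h x) \<partial>lborel)"
    using nn_set_integral_Iab_le[OF continuous_on_subset[OF h_cont sub]] by (meson not_le)
  show "eventually (\<lambda>t. K \<le> integral {t..c} h) (at_left_end a)"
    unfolding eventually_at_left_end[OF ab]
  proof (intro bexI ballI impI)
    fix t assume t: "t \<in> Iab a b" "t < y"
    note yz(3)
    also have "(\<integral>\<^sup>+x\<in>{y..z}. ennreal (h x) \<partial>lborel) \<le> (\<integral>\<^sup>+x\<in>{t..c}. ennreal (h x) \<partial>lborel)"
      using yz(2) t(2) by (intro nn_set_integral_set_mono) (auto simp: Iab_iff)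
    also have "\<dots> = ennreal (integral {t..c} h)" by (rule nn_set_integral_Icc_eq_integral[OF t(1) c])
    finally show "K \<le> integral {t..c} h" by (meson ennreal_leI not_le less_imp_le)
  qed (use sub yz(1) in blast)
qed

context
  assumes tail_finite: "\<And>u. u \<in> Iab a b \<Longrightarrow> (\<integral>\<^sup>+x\<in>{x\<in>Iab a b. u \<le> x}. ennreal (h x) \<partial>lborel) < \<infinity>"
begin

lemma ennreal_tail_integral:
  "u \<in> Iab a b \<Longrightarrow> ennreal (tail_integral a b h u) = (\<integral>\<^sup>+x\<in>{x\<in>Iab a b. u \<le> x}. ennreal (h x) \<partial>lborel)"
  using tail_finite by (simp add: tail_integral_def)

lemma tail_integral_split:
  assumes u: "u \<in> Iab a b" and v: "v \<in> Iab a b" and "u \<le> v"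
  shows "tail_integral a b h u = integral {u..v} h + tail_integral a b h v"
proof -
  have sub: "{u..v} \<subseteq> Iab a b" using atLeastAtMost_subset_Iab u v by blast
  have "0 \<le> integral {u..v} h"
    using integrable_continuous_interval[OF continuous_on_subset[OF h_cont sub]] h_nonneg sub
    by (intro integral_nonneg) auto
  then have "ennreal (integral {u..v} h + tail_integral a b h v)
      = ennreal (integral {u..v} h) + ennreal (tail_integral a b h v)"
    using tail_integral_nonneg by (rule ennreal_plus)
  also have "\<dots> = ennreal (tail_integral a b h u)"
    using nn_set_integral_tail_split[OF assms] ennreal_tail_integral[OF u] ennreal_tail_integral[OF v] by simp
  finally have "ennreal (integral {u..v} h + tail_integral a b h v) = ennreal (tail_integral a b h u)" .
  then show ?thesis
    using \<open>0 \<le> integral {u..v} h\<close> by (subst (asm) ennreal_inj) (simp_all add: tail_integral_nonneg)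
qed

lemma tail_integral_has_real_derivative:
  assumes u: "u \<in> Iab a b"
  shows "(tail_integral a b h has_real_derivative - h u) (at u)"
proof -
  have "((\<lambda>t. tail_integral a b h u - sint h u t) has_real_derivative - h u) (at u)"
    using DERIV_diff[OF DERIV_const sint_has_real_derivative[OF h_cont u u]] by simp
  then show ?thesis
  proof (rule has_field_derivative_transform_within_open[OF _ open_Iab u])
    fix t assume t: "t \<in> Iab a b"
    show "tail_integral a b h u - sint h u t = tail_integral a b h t"
    proof (cases "u \<le> t")
      case True
      then show ?thesis using tail_integral_split[OF u t True] by (simp add: sint_def)
    next
      case False
      then show ?thesis using tail_integral_split[OF t u] by (simp add: sint_def)
    qed
  qed
qed

lemma tail_integral_pos:
  assumes h_pos: "\<And>x. x \<in> Iab a b \<Longrightarrow> 0 < h x" and u: "u \<in> Iab a b"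
  shows "0 < tail_integral a b h u"
proof -
  obtain v where v: "v \<in> Iab a b" "u < v" by (rule Iab_obtain_greater[OF u])
  have "tail_integral a b h v < tail_integral a b h u"
  proof (rule DERIV_neg_imp_decreasing[OF v(2)])
    fix x assume "u \<le> x" "x \<le> v"
    then have "x \<in> Iab a b" using Iab_between[OF u v(1)] by blast
    then show "\<exists>y. (tail_integral a b h has_real_derivative y) (at x) \<and> y < 0"
      using tail_integral_has_real_derivative h_pos by force
  qed
  then show ?thesis using tail_integral_nonneg[of a b h v] by linarith
qed

lemma filterlim_tail_integral_at_left_end:
  assumes c: "c \<in> Iab a b"
    and infinite: "(\<integral>\<^sup>+x\<in>{x\<in>Iab a b. x \<le> c}. ennreal (h x) \<partial>lborel) = \<infinity>"
  shows "filterlim (tail_integral a b h) at_top (at_left_end a)"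
proof (rule filterlim_at_top_mono[OF filterlim_integral_at_left_end[OF c infinite]])
  show "eventually (\<lambda>y. integral {y..c} h \<le> tail_integral a b h y) (at_left_end a)"
    unfolding eventually_at_left_end[OF Iab_less[OF c]]
  proof (intro bexI[of _ c] ballI impI c)
    fix y assume "y \<in> Iab a b" "y < c"
    then show "integral {y..c} h \<le> tail_integral a b h y"
      using tail_integral_split[OF _ c] tail_integral_nonneg[of a b h c] by simp
  qed
qed

context
  fixes k :: "real \<Rightarrow> real"
  assumes k_nonneg: "\<And>x. x \<in> Iab a b \<Longrightarrow> 0 \<le> k x"
    and kh_tail_finite: "\<And>u. u \<in> Iab a b \<Longrightarrow>
      (\<integral>\<^sup>+x\<in>{x\<in>Iab a b. u \<le> x}. ennreal (k x * h x) \<partial>lborel) < \<infinity>"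
begin

lemma tail_integral_mult_ge:
  assumes "0 \<le> m" "\<And>x. x \<in> Iab a b \<Longrightarrow> u \<le> x \<Longrightarrow> m \<le> k x" "u \<in> Iab a b"
  shows "m * tail_integral a b h u \<le> tail_integral a b (\<lambda>x. k x * h x) u"
proof -
  have "m * tail_integral a b h u = tail_integral a b (\<lambda>x. m * h x) u"
    by (rule tail_integral_cmult[OF h_cont \<open>0 \<le> m\<close>, symmetric])
  also have "\<dots> \<le> tail_integral a b (\<lambda>x. k x * h x) u"
    using assms h_nonneg kh_tail_finite by (intro tail_integral_mono) (auto intro: mult_right_mono)
  finally show ?thesis .
qed

lemma tail_integral_mult_le:
  assumes "0 \<le> m" "\<And>x. x \<in> Iab a b \<Longrightarrow> u \<le> x \<Longrightarrow> k x \<le> m" "u \<in> Iab a b"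
  shows "tail_integral a b (\<lambda>x. k x * h x) u \<le> m * tail_integral a b h u"
proof -
  have "(\<integral>\<^sup>+x\<in>{x\<in>Iab a b. u \<le> x}. ennreal (m * h x) \<partial>lborel) < \<infinity>"
    using tail_finite[OF assms(3)] \<open>0 \<le> m\<close>
    by (simp add: nn_set_integral_cmult_Iab[OF h_cont] ennreal_mult_less_top)
  then have "tail_integral a b (\<lambda>x. k x * h x) u \<le> tail_integral a b (\<lambda>x. m * h x) u"
    using assms h_nonneg by (intro tail_integral_mono) (auto intro: mult_right_mono)
  also have "\<dots> = m * tail_integral a b h u"
    by (rule tail_integral_cmult[OF h_cont \<open>0 \<le> m\<close>])
  finally show ?thesis .
qed

lemma eventually_tail_integral_quotient_ge:
  assumes h_pos: "\<And>x. x \<in> Iab a b \<Longrightarrow> 0 < h x" and "a < b" and "0 \<le> c"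
    and "eventually (\<lambda>x. c \<le> k x) (at_right_end b)"
  shows "eventually (\<lambda>u. c \<le> tail_integral a b (\<lambda>x. k x * h x) u / tail_integral a b h u)
           (at_right_end b)"
  using eventually_upward_at_right_end[OF assms(2,4)]
proof eventually_elim
  case (elim u)
  then have "c * tail_integral a b h u \<le> tail_integral a b (\<lambda>x. k x * h x) u"
    using \<open>0 \<le> c\<close> by (intro tail_integral_mult_ge) auto
  then show ?case using tail_integral_pos[OF h_pos] elim by (simp add: pos_le_divide_eq)
qed

lemma eventually_tail_integral_quotient_le:
  assumes h_pos: "\<And>x. x \<in> Iab a b \<Longrightarrow> 0 < h x" and "a < b" and "0 \<le> c"
    and "eventually (\<lambda>x. k x \<le> c) (at_right_end b)"
  shows "eventually (\<lambda>u. tail_integral a b (\<lambda>x. k x * h x) u / tail_integral a b h u \<le> c)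
           (at_right_end b)"
  using eventually_upward_at_right_end[OF assms(2,4)]
proof eventually_elim
  case (elim u)
  then have "tail_integral a b (\<lambda>x. k x * h x) u \<le> c * tail_integral a b h u"
    using \<open>0 \<le> c\<close> by (intro tail_integral_mult_le) auto
  then show ?case using tail_integral_pos[OF h_pos] elim by (simp add: pos_divide_le_eq)
qed

lemma tendsto_tail_integral_quotient_at_right_end:
  assumes h_pos: "\<And>x. x \<in> Iab a b \<Longrightarrow> 0 < h x" and "a < b"
    and lim: "((\<lambda>x. ereal (k x)) \<longlongrightarrow> L) (at_right_end b)"
  shows "((\<lambda>u. ereal (tail_integral a b (\<lambda>x. k x * h x) u / tail_integral a b h u)) \<longlongrightarrow> L)
           (at_right_end b)"
proof (rule order_tendstoI)
  let ?q = "\<lambda>u. tail_integral a b (\<lambda>x. k x * h x) u / tail_integral a b h u"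
  fix M assume "M < L"
  show "eventually (\<lambda>u. M < ereal (?q u)) (at_right_end b)"
  proof (cases "M < 0")
    case True
    have "0 \<le> ?q u" for u by (simp add: tail_integral_nonneg)
    then show ?thesis using True by (intro always_eventually) (auto intro: less_le_trans)
  next
    case False
    obtain c where c: "M < ereal c" "ereal c < L" using ereal_dense2[OF \<open>M < L\<close>] by blast
    have "0 \<le> c" using False c(1) by (cases M) auto
    have "eventually (\<lambda>x. c \<le> k x) (at_right_end b)"
      using order_tendstoD(1)[OF lim c(2)] by (auto elim: eventually_mono)
    then have "eventually (\<lambda>u. c \<le> ?q u) (at_right_end b)"
      using eventually_tail_integral_quotient_ge[OF h_pos \<open>a < b\<close> \<open>0 \<le> c\<close>] by blast
    then show ?thesis
    proof eventually_elim
      case (elim u)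
      then have "ereal c \<le> ereal (?q u)" by simp
      with c(1) show ?case by (rule less_le_trans)
    qed
  qed
next
  let ?q = "\<lambda>u. tail_integral a b (\<lambda>x. k x * h x) u / tail_integral a b h u"
  fix M assume "L < M"
  obtain c where c: "L < ereal c" "ereal c < M" using ereal_dense2[OF \<open>L < M\<close>] by blast
  have "eventually (\<lambda>x. 0 \<le> ereal (k x)) (at_right_end b)"
    using eventually_upward_at_right_end[OF \<open>a < b\<close>, of "\<lambda>_. True"] k_nonneg
    by (auto elim: eventually_mono)
  then have "0 \<le> L" by (intro tendsto_lowerbound[OF lim]) (simp_all add: at_right_end_def)
  then have "0 \<le> ereal c" using c(1) by (meson less_imp_le order_trans)
  then have "0 \<le> c" by simp
  have "eventually (\<lambda>x. k x \<le> c) (at_right_end b)"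
    using order_tendstoD(2)[OF lim c(1)] by (auto elim: eventually_mono)
  then have "eventually (\<lambda>u. ?q u \<le> c) (at_right_end b)"
    using eventually_tail_integral_quotient_le[OF h_pos \<open>a < b\<close> \<open>0 \<le> c\<close>] by blast
  then show "eventually (\<lambda>u. ereal (?q u) < M) (at_right_end b)"
  proof eventually_elim
    case (elim u)
    then have "ereal (?q u) \<le> ereal c" by simp
    then show ?case using c(2) by (rule le_less_trans)
  qed
qed

end

end

end

section \<open>Natural diffusions\<close>

locale natural_diffusion =
  fixes mu sig :: "real \<Rightarrow> real" and x0 :: real and a b :: ereal
  assumes setting: "diff_setting mu sig x0 a b"
    and scale_left_finite: "Smeas mu sig x0 {v \<in> Iab a b. v \<le> x0} < \<infinity>"
    and speed_right_finite: "\<And>y. y \<in> Iab a b \<Longrightarrow> Mmeas mu sig x0 {v \<in> Iab a b. y \<le> v} < \<infinity>"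
    and natural_left: "natural_a mu sig x0 a b"
    and natural_right: "natural_b mu sig x0 a b"
begin

abbreviation s :: "real \<Rightarrow> real" where "s \<equiv> sdens mu sig x0"
abbreviation m :: "real \<Rightarrow> real" where "m \<equiv> mdens mu sig x0"
abbreviation M :: "real \<Rightarrow> real" where "M \<equiv> Mtail mu sig x0 a b"
abbreviation \<zeta> :: "real \<Rightarrow> real" where "\<zeta> \<equiv> zeta mu sig x0 a b"

lemma a_less_b: "a < b" and x0_in: "x0 \<in> Iab a b"
  using setting by (simp_all add: diff_setting_def)

lemma s_pos: "0 < s x"
  by (simp add: sdens_def)

lemma continuous_on_s: "continuous_on (Iab a b) s"
proof -
  let ?q = "\<lambda>v. 2 * mu v / (sig v)^2"
  have "continuous_on (Iab a b) ?q"
    using setting by (auto simp: diff_setting_def intro!: continuous_intros)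
  then have "isCont (\<lambda>x. sint ?q x0 x) x" if "x \<in> Iab a b" for x
    using sint_has_real_derivative x0_in that by (blast intro: DERIV_isCont)
  then have "isCont s x" if "x \<in> Iab a b" for x
    unfolding sdens_def using that by (intro continuous_intros) auto
  then show ?thesis by (intro continuous_at_imp_continuous_on) blast
qed

lemma m_pos: "x \<in> Iab a b \<Longrightarrow> 0 < m x"
  using setting s_pos[of x] by (simp add: mdens_def diff_setting_def)

lemma continuous_on_m: "continuous_on (Iab a b) m"
proof -
  have "s x \<noteq> 0" for x using s_pos[of x] by simp
  then show ?thesis
    unfolding mdens_def using setting continuous_on_s
    by (intro continuous_intros) (auto simp: diff_setting_def)
qed

lemma speed_tail_finite: "u \<in> Iab a b \<Longrightarrow> (\<integral>\<^sup>+x\<in>{x\<in>Iab a b. u \<le> x}. ennreal (m x) \<partial>lborel) < \<infinity>"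
  using speed_right_finite by (simp add: Mmeas_def)

lemmas speed_facts = continuous_on_m less_imp_le[OF m_pos] speed_tail_finite

lemma Mtail_eq: "M = tail_integral a b m"
  by (simp add: fun_eq_iff Mtail_def tail_integral_def Mmeas_def)

lemma Mtail_has_real_derivative: "x \<in> Iab a b \<Longrightarrow> (M has_real_derivative - m x) (at x)"
  unfolding Mtail_eq by (rule tail_integral_has_real_derivative[OF speed_facts])

lemma Mtail_pos: "x \<in> Iab a b \<Longrightarrow> 0 < M x"
  unfolding Mtail_eq by (rule tail_integral_pos[OF speed_facts m_pos])

lemma continuous_on_Mtail: "continuous_on (Iab a b) M"
  using Mtail_has_real_derivative by (blast intro: continuous_at_imp_continuous_on DERIV_isCont)

lemma Mmeas_times_s_le:
  assumes "u \<in> Iab a b" "A \<subseteq> {v \<in> Iab a b. u \<le> v}"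
  shows "Mmeas mu sig x0 A * ennreal (s u) \<le> ennreal (2 * M u * s u)"
proof -
  have "Mmeas mu sig x0 A \<le> ennreal (M u)"
    using nn_set_integral_set_mono[OF assms(2), of lborel "\<lambda>x. ennreal (m x)"]
      ennreal_tail_integral[OF speed_facts assms(1)]
    unfolding Mmeas_def Mtail_eq by simp
  then have "Mmeas mu sig x0 A * ennreal (s u) \<le> ennreal (M u * s u)"
    using s_pos[of u] Mtail_pos[OF assms(1)] by (simp add: ennreal_mult mult_right_mono)
  also have "\<dots> \<le> ennreal (2 * M u * s u)"
    using s_pos[of u] Mtail_pos[OF assms(1)] by (intro ennreal_leI) simp
  finally show ?thesis .
qed

text \<open>Otherwise \<open>N(a) \<le> M(a, x\<^sub>0] S(a, x\<^sub>0] < \<infinity>\<close>.\<close>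
lemma speed_left_infinite: "(\<integral>\<^sup>+x\<in>{x\<in>Iab a b. x \<le> x0}. ennreal (m x) \<partial>lborel) = \<infinity>"
proof (rule ccontr)
  let ?speed = "\<integral>\<^sup>+x\<in>{x\<in>Iab a b. x \<le> x0}. ennreal (m x) \<partial>lborel"
  assume "?speed \<noteq> \<infinity>"
  then obtain k where k: "?speed = ennreal k" "0 \<le> k" by (cases ?speed) auto
  have "Mmeas mu sig x0 {v\<in>Iab a b. v \<le> u} * ennreal (s u) \<le> ennreal (k * s u)"
    if "u \<le> x0" for u
  proof -
    have "Mmeas mu sig x0 {v\<in>Iab a b. v \<le> u} \<le> ennreal k"
      unfolding Mmeas_def k(1)[symmetric] by (rule nn_set_integral_set_mono) (use that in auto)
    then show ?thesis using k(2) s_pos[of u] by (simp add: ennreal_mult mult_right_mono)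
  qed
  then have "N_a mu sig x0 a b \<le> (\<integral>\<^sup>+u\<in>{u\<in>Iab a b. u \<le> x0}. ennreal (k * s u) \<partial>lborel)"
    unfolding N_a_def by (intro nn_integral_mono) (auto split: split_indicator)
  also have "\<dots> = ennreal k * Smeas mu sig x0 {v\<in>Iab a b. v \<le> x0}"
    unfolding Smeas_def using k(2) by (intro nn_set_integral_cmult_Iab[OF continuous_on_s]) auto
  also have "\<dots> < \<infinity>" using scale_left_finite by (simp add: ennreal_mult_less_top)
  finally show False using natural_left by (simp add: natural_a_def)
qed

lemma filterlim_Mtail_at_left_end: "filterlim M at_top (at_left_end a)"
  unfolding Mtail_eq
  by (rule filterlim_tail_integral_at_left_end[OF speed_facts x0_in speed_left_infinite])

lemma zeta_has_real_derivative:
  "x \<in> Iab a b \<Longrightarrow> (\<zeta> has_real_derivative 2 * M x * s x) (at x)"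
  unfolding zeta_def
  by (rule sint_has_real_derivative[OF _ x0_in])
     (use continuous_on_Mtail continuous_on_s in \<open>auto intro!: continuous_intros\<close>)

lemma zeta_derivative_pos: "x \<in> Iab a b \<Longrightarrow> 0 < 2 * M x * s x"
  using Mtail_pos s_pos by simp

lemma filterlim_zeta_at_left_end: "filterlim (\<zeta>) at_bot (at_left_end a)"
proof -
  let ?h = "\<lambda>u. 2 * M u * s u"
  have h: "continuous_on (Iab a b) ?h" "\<And>x. x \<in> Iab a b \<Longrightarrow> 0 \<le> ?h x"
    using continuous_on_Mtail continuous_on_s Mtail_pos s_pos
    by (auto intro!: continuous_intros less_imp_le)
  have "Sigma_a mu sig x0 a b \<le> (\<integral>\<^sup>+u\<in>{u\<in>Iab a b. u \<le> x0}. ennreal (?h u) \<partial>lborel)"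
    unfolding Sigma_a_def using Mmeas_times_s_le[of _ "{v\<in>Iab a b. _ \<le> v \<and> v \<le> x0}"]
    by (intro nn_integral_mono) (auto split: split_indicator)
  then have "(\<integral>\<^sup>+u\<in>{u\<in>Iab a b. u \<le> x0}. ennreal (?h u) \<partial>lborel) = \<infinity>"
    using natural_left by (simp add: natural_a_def top_unique)
  from filterlim_integral_at_left_end[OF h x0_in this]
  have "filterlim (\<lambda>y. - \<zeta> y) at_top (at_left_end a)"
  proof (rule filterlim_at_top_mono)
    show "eventually (\<lambda>y. integral {y..x0} ?h \<le> - \<zeta> y) (at_left_end a)"
      unfolding eventually_at_left_end[OF a_less_b] using x0_in
      by (intro bexI[of _ x0]) (auto simp: zeta_def sint_def)
  qed
  then show ?thesis by (simp add: filterlim_uminus_at_bot)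
qed

lemma filterlim_zeta_at_right_end: "filterlim (\<zeta>) at_top (at_right_end b)"
proof -
  let ?h = "\<lambda>u. 2 * M u * s u"
  have h: "continuous_on (Iab a b) ?h" "\<And>x. x \<in> Iab a b \<Longrightarrow> 0 \<le> ?h x"
    using continuous_on_Mtail continuous_on_s Mtail_pos s_pos
    by (auto intro!: continuous_intros less_imp_le)
  have "N_b mu sig x0 a b \<le> (\<integral>\<^sup>+u\<in>{u\<in>Iab a b. x0 \<le> u}. ennreal (?h u) \<partial>lborel)"
    unfolding N_b_def using Mmeas_times_s_le
    by (intro nn_integral_mono) (auto split: split_indicator)
  then have "(\<integral>\<^sup>+u\<in>{u\<in>Iab a b. x0 \<le> u}. ennreal (?h u) \<partial>lborel) = \<infinity>"
    using natural_right by (simp add: natural_b_def top_unique)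
  from filterlim_integral_at_right_end[OF h x0_in this]
  show ?thesis
  proof (rule filterlim_at_top_mono)
    show "eventually (\<lambda>z. integral {x0..z} ?h \<le> \<zeta> z) (at_right_end b)"
      unfolding eventually_at_right_end[OF a_less_b] using x0_in
      by (intro bexI[of _ x0]) (auto simp: zeta_def sint_def)
  qed
qed

end

locale natural_diffusion_cost = natural_diffusion +
  fixes c0 :: "real \<Rightarrow> real"
  assumes c0_nonneg: "\<And>x. x \<in> Iab a b \<Longrightarrow> 0 \<le> c0 x"
    and continuous_on_c0: "continuous_on (Iab a b) c0"
    and cost_tail_finite: "\<And>u. u \<in> Iab a b \<Longrightarrow>
      (\<integral>\<^sup>+x\<in>{x\<in>Iab a b. u \<le> x}. ennreal (c0 x * m x) \<partial>lborel) < \<infinity>"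
begin

abbreviation C :: "real \<Rightarrow> real" where "C \<equiv> tail_integral a b (\<lambda>x. c0 x * m x)"
abbreviation g :: "real \<Rightarrow> real" where "g \<equiv> g0 mu sig x0 a b c0"

lemma continuous_on_cost_density: "continuous_on (Iab a b) (\<lambda>x. c0 x * m x)"
  using continuous_on_c0 continuous_on_m by (rule continuous_on_mult)

lemma cost_density_nonneg: "x \<in> Iab a b \<Longrightarrow> 0 \<le> c0 x * m x"
  using c0_nonneg m_pos by (simp add: less_imp_le)

lemmas cost_facts = continuous_on_cost_density cost_density_nonneg cost_tail_finite

lemma C_has_real_derivative: "x \<in> Iab a b \<Longrightarrow> (C has_real_derivative - (c0 x * m x)) (at x)"
  by (rule tail_integral_has_real_derivative[OF cost_facts])

lemma c0tail_eq: "c0tail mu sig x0 a b c0 u = 2 * C u"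
proof -
  have "c0tail mu sig x0 a b c0 u = tail_integral a b (\<lambda>x. 2 * (c0 x * m x)) u"
    by (simp add: c0tail_def tail_integral_def mult.assoc)
  then show ?thesis by (simp add: tail_integral_cmult[OF continuous_on_cost_density])
qed

lemma g0_has_real_derivative:
  "x \<in> Iab a b \<Longrightarrow> (g has_real_derivative 2 * C x * s x) (at x)"
proof -
  have "continuous_on (Iab a b) C"
    using C_has_real_derivative by (blast intro: continuous_at_imp_continuous_on DERIV_isCont)
  then have "continuous_on (Iab a b) (\<lambda>u. 2 * C u * s u)"
    using continuous_on_s by (intro continuous_intros)
  then show "x \<in> Iab a b \<Longrightarrow> ?thesis"
    unfolding g0_def c0tail_eq by (rule sint_has_real_derivative[OF _ x0_in])
qed

lemma derivative_quotient_at_left_end: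
  assumes lim: "((\<lambda>x. ereal (c0 x)) \<longlongrightarrow> L) (at_left_end a)"
  shows "((\<lambda>x. ereal (2 * C x * s x / (2 * M x * s x))) \<longlongrightarrow> L) (at_left_end a)"
proof -
  have "eventually (\<lambda>x. ereal (c0 x) = ereal (c0 x * m x / m x)) (at_left_end a)"
    unfolding eventually_at_left_end[OF a_less_b] using x0_in m_pos
    by (intro bexI[of _ x0]) (auto simp: less_imp_neq[symmetric])
  with lim have "((\<lambda>x. ereal (c0 x * m x / m x)) \<longlongrightarrow> L) (at_left_end a)"
    by (rule Lim_transform_eventually)
  moreover have "((\<lambda>y. - C y) has_real_derivative c0 x * m x) (at x)"
    "((\<lambda>y. - M y) has_real_derivative m x) (at x)" if "x \<in> Iab a b" for x
    using DERIV_minus[OF C_has_real_derivative[OF that]] DERIV_minus[OF Mtail_has_real_derivative[OF that]]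
    by simp_all
  moreover have "filterlim (\<lambda>y. - M y) at_infinity (at_left_end a)"
    using filterlim_Mtail_at_left_end
    by (intro filterlim_mono[OF _ at_bot_le_at_infinity order_refl]) (simp add: filterlim_uminus_at_bot)
  ultimately have "((\<lambda>y. ereal ((- C y - 0) / (- M y - 0))) \<longlongrightarrow> L) (at_left_end a)"
    by (intro lhopital_end[OF end_filter_at_left_end[OF a_less_b]]) (auto intro: m_pos)
  moreover have "(- C y - 0) / (- M y - 0) = 2 * C y * s y / (2 * M y * s y)" for y
    using s_pos[of y] by simp
  ultimately show ?thesis by simp
qed

lemma derivative_quotient_at_right_end:
  assumes lim: "((\<lambda>x. ereal (c0 x)) \<longlongrightarrow> L) (at_right_end b)"
  shows "((\<lambda>x. ereal (2 * C x * s x / (2 * M x * s x))) \<longlongrightarrow> L) (at_right_end b)"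
proof -
  have "((\<lambda>u. ereal (C u / tail_integral a b m u)) \<longlongrightarrow> L) (at_right_end b)"
    using tendsto_tail_integral_quotient_at_right_end[OF speed_facts c0_nonneg cost_tail_finite m_pos a_less_b lim] .
  moreover have "C y / tail_integral a b m y = 2 * C y * s y / (2 * M y * s y)" for y
    using s_pos[of y] by (simp add: Mtail_eq)
  ultimately show ?thesis by simp
qed

lemma g0_zeta_quotients_at_left_end:
  assumes "((\<lambda>x. ereal (c0 x)) \<longlongrightarrow> L) (at_left_end a)"
  shows "((\<lambda>y. ereal ((g y - A) / (\<zeta> y - B))) \<longlongrightarrow> L)
           (at_left_end a)"
    and "((\<lambda>(y, z). ereal ((g z - g y)
             / (\<zeta> z - \<zeta> y))) \<longlongrightarrow> L)
           (inf (at_left_end a \<times>\<^sub>F at_left_end a) (principal {(y, z). y < z}))"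
proof -
  have "filterlim (\<zeta>) at_infinity (at_left_end a)"
    using filterlim_zeta_at_left_end by (rule filterlim_mono[OF _ at_bot_le_at_infinity order_refl])
  with end_filter_at_left_end[OF a_less_b] g0_has_real_derivative zeta_has_real_derivative
    zeta_derivative_pos derivative_quotient_at_left_end[OF assms]
  show "((\<lambda>y. ereal ((g y - A) / (\<zeta> y - B))) \<longlongrightarrow> L)
          (at_left_end a)"
    by (rule lhopital_end)
  show "((\<lambda>(y, z). ereal ((g z - g y)
           / (\<zeta> z - \<zeta> y))) \<longlongrightarrow> L)
          (inf (at_left_end a \<times>\<^sub>F at_left_end a) (principal {(y, z). y < z}))"
    by (rule lhopital_end_pairs[OF end_filter_at_left_end[OF a_less_b] g0_has_real_derivative
          zeta_has_real_derivative zeta_derivative_pos derivative_quotient_at_left_end[OF assms]])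
qed

lemma g0_zeta_quotients_at_right_end:
  assumes "((\<lambda>x. ereal (c0 x)) \<longlongrightarrow> L) (at_right_end b)"
  shows "((\<lambda>z. ereal ((g z - A) / (\<zeta> z - B))) \<longlongrightarrow> L)
           (at_right_end b)"
    and "((\<lambda>(y, z). ereal ((g z - g y)
             / (\<zeta> z - \<zeta> y))) \<longlongrightarrow> L)
           (inf (at_right_end b \<times>\<^sub>F at_right_end b) (principal {(y, z). y < z}))"
proof -
  have "filterlim (\<zeta>) at_infinity (at_right_end b)"
    using filterlim_zeta_at_right_end by (rule filterlim_at_top_imp_at_infinity)
  with end_filter_at_right_end[OF a_less_b] g0_has_real_derivative zeta_has_real_derivative
    zeta_derivative_pos derivative_quotient_at_right_end[OF assms]
  show "((\<lambda>z. ereal ((g z - A) / (\<zeta> z - B))) \<longlongrightarrow> L)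
          (at_right_end b)"
    by (rule lhopital_end)
  show "((\<lambda>(y, z). ereal ((g z - g y)
           / (\<zeta> z - \<zeta> y))) \<longlongrightarrow> L)
          (inf (at_right_end b \<times>\<^sub>F at_right_end b) (principal {(y, z). y < z}))"
    by (rule lhopital_end_pairs[OF end_filter_at_right_end[OF a_less_b] g0_has_real_derivative
          zeta_has_real_derivative zeta_derivative_pos derivative_quotient_at_right_end[OF assms]])
qed

end

lemma natural_diffusion_cost_of_conditions:
  assumes "diff_setting mu sig x0 a b" "cond_A mu sig x0 a b refl_a" "cond_B mu sig x0 a b refl_a c0 c1 k1"
    and natural: "natural_a mu sig x0 a b" "natural_b mu sig x0 a b"
  shows "natural_diffusion_cost mu sig x0 a b c0"
proof -
  have x0: "x0 \<in> Iab a b" using assms(1) by (simp add: diff_setting_def)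
  have "Espace mu sig x0 a b = Iab a b"
    using natural by (auto simp: Espace_def Eleft_def Eright_def attainable_a_def regular_a_def
        exit_a_def natural_a_def entrance_b_def natural_b_def)
  then show ?thesis
    using assms x0 by unfold_locales (auto simp: cond_A_def cond_B_def Let_def)
qed

theorem lemma2p3:
  fixes mu sig c0 :: "real \<Rightarrow> real" and x0 k1 :: real and a b ca cb :: ereal
    and c1 :: "real \<Rightarrow> real \<Rightarrow> ereal" and refl_a :: bool
  assumes "diff_setting mu sig x0 a b"
    and "cond_A mu sig x0 a b refl_a"
    and "cond_B mu sig x0 a b refl_a c0 c1 k1"
    and "natural_a mu sig x0 a b" and "natural_b mu sig x0 a b"
    and "((\<lambda>x. ereal (c0 x)) \<longlongrightarrow> ca) (at_left_end a)"
    and "((\<lambda>x. ereal (c0 x)) \<longlongrightarrow> cb) (at_right_end b)"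
  shows "let g = g0 mu sig x0 a b c0; \<zeta> = zeta mu sig x0 a b; I = Iab a b in
     (\<forall>z\<in>I. ((\<lambda>y. ereal ((g z - g y) / (\<zeta> z - \<zeta> y))) \<longlongrightarrow> ca) (at_left_end a)) \<and>
     (\<forall>y\<in>I. ((\<lambda>z. ereal ((g z - g y) / (\<zeta> z - \<zeta> y))) \<longlongrightarrow> cb) (at_right_end b)) \<and>
     ((\<lambda>(y, z). ereal ((g z - g y) / (\<zeta> z - \<zeta> y))) \<longlongrightarrow> ca)
        (inf (at_left_end a \<times>\<^sub>F at_left_end a) (principal {(y, z). y < z})) \<and>
     ((\<lambda>(y, z). ereal ((g z - g y) / (\<zeta> z - \<zeta> y))) \<longlongrightarrow> cb)
        (inf (at_right_end b \<times>\<^sub>F at_right_end b) (principal {(y, z). y < z})) \<and>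
     ((\<lambda>y. ereal (g y / \<zeta> y)) \<longlongrightarrow> ca) (at_left_end a) \<and>
     ((\<lambda>z. ereal (g z / \<zeta> z)) \<longlongrightarrow> cb) (at_right_end b) \<and>
     (ca > 0 \<longrightarrow> filterlim g at_bot (at_left_end a)) \<and>
     (cb > 0 \<longrightarrow> filterlim g at_top (at_right_end b))"
proof -
  interpret natural_diffusion_cost mu sig x0 a b c0
    using natural_diffusion_cost_of_conditions[OF assms(1-5)] .
  note left = g0_zeta_quotients_at_left_end[OF assms(6)]
    and right = g0_zeta_quotients_at_right_end[OF assms(7)]
  have ratio_a: "((\<lambda>y. ereal (g y / \<zeta> y)) \<longlongrightarrow> ca) (at_left_end a)"
    using left(1)[of 0 0] by simp
  have ratio_b: "((\<lambda>z. ereal (g z / \<zeta> z)) \<longlongrightarrow> cb) (at_right_end b)"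
    using right(1)[of 0 0] by simp
  have "((\<lambda>y. ereal ((g z - g y) / (\<zeta> z - \<zeta> y))) \<longlongrightarrow> ca) (at_left_end a)" for z
    by (subst divide_diff_swap) (rule left(1))
  then show ?thesis
    unfolding Let_def using right ratio_a ratio_b left(2)
      filterlim_at_bot_of_quotient[OF ratio_a _ filterlim_zeta_at_left_end]
      filterlim_at_top_of_quotient[OF ratio_b _ filterlim_zeta_at_right_end]
    by blast
qed

end
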